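(* Let $d\ge2$ and $x\in X_d$. If for every grid $y\in\pi^{-1}(x)$ the closure $\overline{A_{d,x}y}\subset\pi^{-1}(x)$ contains an FL grid, then $x$ is GFL. In particular, if for every grid $y\in\pi^{-1}(x)$ the closure $\overline{A_{d,x}y}$ contains a rational grid, then $x$ is GFL.
   Context: $X_d$ is the space of unimodular lattices in $\mathbb{R}^d$, $Y_d$ the space of grids $x+v$ ($x\in X_d$, $v\in\mathbb{R}^d$), $\pi(x+v)=x$; the fiber $\pi^{-1}(x)$ is the torus $\mathbb{R}^d/x$. $A_d$ is the group of positive diagonal $d\times d$ matrices of determinant one, acting by $a(x+v)=ax+av$; $A_{d,x}$ is the stabilizer of $x$ in $A_d$, which acts on $\pi^{-1}(x)$. For $w\in\mathbb{R}^d$, $N(w)=\prod_iw_i$; $N(y)=\inf\{|N(w)|:w\in y\}$; $n(x+v)=x+nv$. A grid $y$ is FL if $N(ny)=0$ for some nonzero integer $n$. A lattice $x$ is GFL if every $y\in\pi^{-1}(x)$ is FL. A grid $y$ is rational if it is a torsion point of the torus $\pi^{-1}(\pi(y))$. *)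

theory Defs
  imports "HOL-Analysis.Analysis"
begin

text \<open>Vectors in R^d are modelled as real^'n with d = CARD('n).
  Lattices and grids are modelled as subsets of real^'n.\<close>

definition unimodular_lattice :: "(real^'n) set \<Rightarrow> bool" where
  "unimodular_lattice x \<longleftrightarrow>
     (\<exists>M :: real^'n^'n. \<bar>det M\<bar> = 1 \<and>
        x = (\<lambda>k. M *v k) ` {k. \<forall>i. k $ i \<in> \<int>})"

definition grid_of :: "(real^'n) set \<Rightarrow> real^'n \<Rightarrow> (real^'n) set" where
  "grid_of x v = (\<lambda>w. v + w) ` x"

definition fiber :: "(real^'n) set \<Rightarrow> (real^'n) set set" where
  "fiber x = {grid_of x v | v. True}"

definition diag_group :: "(real^'n^'n) set" where
  "diag_group = {a. (\<forall>i j. i \<noteq> j \<longrightarrow> a $ i $ j = 0) \<and> (\<forall>i. a $ i $ i > 0) \<and> det a = 1}"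

definition stab :: "(real^'n) set \<Rightarrow> (real^'n^'n) set" where
  "stab x = {a \<in> diag_group. (\<lambda>w. a *v w) ` x = x}"

definition normN :: "real^'n \<Rightarrow> real" where
  "normN w = (\<Prod>i\<in>UNIV. w $ i)"

definition gridN :: "(real^'n) set \<Rightarrow> real" where
  "gridN y = Inf ((\<lambda>w. \<bar>normN w\<bar>) ` y)"

definition FL :: "(real^'n) set \<Rightarrow> bool" where
  "FL y \<longleftrightarrow> (\<exists>x v. unimodular_lattice x \<and> y = grid_of x v \<and>
      (\<exists>n::int. n \<noteq> 0 \<and> gridN (grid_of x (of_int n *\<^sub>R v)) = 0))"

definition GFL :: "(real^'n) set \<Rightarrow> bool" where
  "GFL x \<longleftrightarrow> (\<forall>y \<in> fiber x. FL y)"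

text \<open>Rational grids: torsion points of the torus R^d / x.\<close>
definition rational_grid :: "(real^'n) set \<Rightarrow> bool" where
  "rational_grid y \<longleftrightarrow> (\<exists>x v. unimodular_lattice x \<and> y = grid_of x v \<and>
      (\<exists>n::nat. n > 0 \<and> of_nat n *\<^sub>R v \<in> x))"

text \<open>Closure of the orbit A_{d,x} y inside the torus pi^{-1}(x) = R^d/x:
  x + u lies in it iff for every e > 0 some translate a y (a in A_{d,x})
  has a point within distance e of u (i.e. the torus distance is < e).\<close>
definition orbit_closure :: "(real^'n) set \<Rightarrow> (real^'n) set \<Rightarrow> (real^'n) set set" where
  "orbit_closure x y = {grid_of x u | u.
      \<forall>e>0. \<exists>a \<in> stab x. \<exists>p \<in> (\<lambda>w. a *v w) ` y. dist p u < e}"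

end

theory Submission
  imports Defs
begin

text \<open>The quantity N(x + u) is invariant under A_{d,x} (as N(a q) = N q and a x = x) and
  upper semicontinuous in u (an infimum of continuous functions).  Hence the set of u with
  N(x + n u) < e is open and A_{d,x}-invariant; if it meets the orbit closure of x + v, it
  meets the orbit itself, so it contains v.  Thus N(n z) = 0 for some z in the orbit closure
  of y forces N(n y) = 0.  A rational grid is FL because some multiple of it is x, which
  contains 0.\<close>

lemma unimodular_lattice_zero: "unimodular_lattice x \<Longrightarrow> 0 \<in> x"
  unfolding unimodular_lattice_def by (force intro: image_eqI[of _ _ 0])

lemma unimodular_lattice_int_combination:
  fixes x :: "(real^'a) set"
  assumes "unimodular_lattice x" "a \<in> x" "b \<in> x"
  shows "of_int m *\<^sub>R a + of_int n *\<^sub>R b \<in> x"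
proof -
  obtain M :: "real^'a^'a" where x: "x = (\<lambda>k. M *v k) ` {k. \<forall>i. k $ i \<in> \<int>}"
    using assms(1) unfolding unimodular_lattice_def by blast
  obtain k l where "a = M *v k" "b = M *v l" "\<forall>i. k $ i \<in> \<int>" "\<forall>i. l $ i \<in> \<int>"
    using assms(2,3) unfolding x by auto
  then show ?thesis
    unfolding x
    by (intro image_eqI[of _ _ "of_int m *\<^sub>R k + of_int n *\<^sub>R l"])
       (auto simp: matrix_vector_right_distrib matrix_vector_mult_scaleR)
qed

lemma unimodular_lattice_add: "unimodular_lattice x \<Longrightarrow> a \<in> x \<Longrightarrow> b \<in> x \<Longrightarrow> a + b \<in> x"
  using unimodular_lattice_int_combination[of x a b 1 1] by simp

lemma unimodular_lattice_diff: "unimodular_lattice x \<Longrightarrow> a \<in> x \<Longrightarrow> b \<in> x \<Longrightarrow> a - b \<in> x"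
  using unimodular_lattice_int_combination[of x a b 1 "-1"] by simp

lemma unimodular_lattice_scaleR_int: "unimodular_lattice x \<Longrightarrow> a \<in> x \<Longrightarrow> of_int m *\<^sub>R a \<in> x"
  using unimodular_lattice_int_combination[of x a a m 0] by simp

lemma grid_of_eq_iff:
  assumes "unimodular_lattice x"
  shows "grid_of x u = grid_of x v \<longleftrightarrow> u - v \<in> x"
proof
  assume "grid_of x u = grid_of x v"
  then have "u \<in> grid_of x v"
    using unimodular_lattice_zero[OF assms] unfolding grid_of_def by (metis add_0_right image_eqI)
  then show "u - v \<in> x" unfolding grid_of_def by auto
next
  have "grid_of x u \<subseteq> grid_of x v" if "u - v \<in> x" for u v
    using unimodular_lattice_add[OF assms that]
    unfolding grid_of_def by (force intro: image_eqI[of _ _ "u - v + _"])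
  moreover assume "u - v \<in> x"
  moreover have "v - u \<in> x"
    using unimodular_lattice_diff[OF assms unimodular_lattice_zero[OF assms] \<open>u - v \<in> x\<close>] by simp
  ultimately show "grid_of x u = grid_of x v" by blast
qed

lemma lattice_eq_grid_differences:
  assumes "unimodular_lattice x"
  shows "x = {p - q | p q. p \<in> grid_of x v \<and> q \<in> grid_of x v}"
proof (intro set_eqI iffI)
  fix w assume "w \<in> x"
  then show "w \<in> {p - q | p q. p \<in> grid_of x v \<and> q \<in> grid_of x v}"
    using unimodular_lattice_zero[OF assms] unfolding grid_of_def
    by (intro CollectI exI[of _ "v + w"] exI[of _ "v + 0"]) auto
qed (auto simp: grid_of_def intro: unimodular_lattice_diff[OF assms])

lemma grid_of_determines_lattice:
  assumes "unimodular_lattice x" "unimodular_lattice x'" "grid_of x' v' = grid_of x v"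
  shows "x' = x"
  using lattice_eq_grid_differences[OF assms(1), of v] lattice_eq_grid_differences[OF assms(2), of v']
  by (simp add: assms(3))

lemma gridN_nonneg: "unimodular_lattice x \<Longrightarrow> gridN (grid_of x v) \<ge> 0"
  unfolding gridN_def grid_of_def using unimodular_lattice_zero
  by (intro cInf_greatest) auto

lemma gridN_less_iff:
  assumes "unimodular_lattice x"
  shows "gridN (grid_of x v) < e \<longleftrightarrow> (\<exists>w\<in>x. \<bar>normN (v + w)\<bar> < e)"
proof -
  have "grid_of x v \<noteq> {}" using unimodular_lattice_zero[OF assms] unfolding grid_of_def by blast
  moreover have "bdd_below ((\<lambda>w. \<bar>normN w\<bar>) ` grid_of x v)"
    by (rule bdd_belowI[of _ 0]) auto
  ultimately show ?thesis
    unfolding gridN_def by (subst cInf_less_iff) (auto simp: grid_of_def)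
qed

lemma gridN_eq_0_iff:
  assumes "unimodular_lattice x"
  shows "gridN (grid_of x v) = 0 \<longleftrightarrow> (\<forall>e>0. gridN (grid_of x v) < e)"
  using gridN_nonneg[OF assms, of v] by (metis less_eq_real_def less_irrefl)

lemma normN_diag_group:
  assumes "a \<in> diag_group"
  shows "normN (a *v q) = normN q"
proof -
  have off: "\<And>i j. i \<noteq> j \<Longrightarrow> a $ i $ j = 0" and "det a = 1"
    using assms unfolding diag_group_def by auto
  have "(a *v q) $ i = a $ i $ i * q $ i" for i
    unfolding matrix_vector_mult_def by (simp add: off sum.remove[of _ i])
  then have "normN (a *v q) = (\<Prod>i\<in>UNIV. a $ i $ i) * normN q"
    unfolding normN_def by (simp add: prod.distrib)
  with \<open>det a = 1\<close> show ?thesis by (simp add: det_diagonal[OF off])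
qed

lemma gridN_stab:
  assumes "unimodular_lattice x" "a \<in> stab x"
  shows "gridN (grid_of x (a *v v)) = gridN (grid_of x v)"
proof -
  have "a \<in> diag_group" and ax: "(\<lambda>w. a *v w) ` x = x"
    using assms(2) unfolding stab_def by auto
  have "(\<lambda>w. a *v w) ` grid_of x v = grid_of x (a *v v)"
    by (subst ax[symmetric]) (auto simp: grid_of_def image_image matrix_vector_right_distrib)
  then show ?thesis
    unfolding gridN_def using normN_diag_group[OF \<open>a \<in> diag_group\<close>]
    by (metis (no_types, lifting) image_cong image_image)
qed

lemma open_gridN_less:
  assumes "unimodular_lattice x"
  shows "open {u. gridN (grid_of x u) < e}"
proof -
  have "{u. gridN (grid_of x u) < e} = (\<Union>w\<in>x. (\<lambda>u. \<bar>normN (u + w)\<bar>) -` {..<e})"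
    using gridN_less_iff[OF assms] by auto
  moreover have "continuous_on UNIV (\<lambda>u. \<bar>normN (u + w)\<bar>)" for w
    unfolding normN_def by (intro continuous_intros)
  ultimately show ?thesis by (auto intro!: open_vimage open_UN)
qed

lemma FL_grid_of_iff:
  assumes "unimodular_lattice x"
  shows "FL (grid_of x v) \<longleftrightarrow> (\<exists>n::int. n \<noteq> 0 \<and> gridN (grid_of x (of_int n *\<^sub>R v)) = 0)"
proof
  assume "FL (grid_of x v)"
  then obtain x' v' n where x': "unimodular_lattice x'" "grid_of x v = grid_of x' v'"
    and n: "n \<noteq> 0" "gridN (grid_of x' (of_int n *\<^sub>R v')) = 0"
    unfolding FL_def by blast
  have "x' = x" using grid_of_determines_lattice[OF assms x'(1) x'(2)[symmetric]] .
  then have "v - v' \<in> x" using grid_of_eq_iff[OF assms] x'(2) by simp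
  then have "of_int n *\<^sub>R v - of_int n *\<^sub>R v' \<in> x"
    using unimodular_lattice_scaleR_int[OF assms] by (metis scaleR_right_diff_distrib)
  then show "\<exists>n::int. n \<noteq> 0 \<and> gridN (grid_of x (of_int n *\<^sub>R v)) = 0"
    using n \<open>x' = x\<close> grid_of_eq_iff[OF assms] by metis
qed (use assms in \<open>auto simp: FL_def\<close>)

lemma gridN_scaled_eq_0_of_approx:
  assumes lat: "unimodular_lattice x"
    and approx: "\<forall>e>0. \<exists>a \<in> stab x. \<exists>p \<in> (\<lambda>w. a *v w) ` grid_of x v. dist p u < e"
    and zero: "gridN (grid_of x (of_int n *\<^sub>R u)) = 0"
  shows "gridN (grid_of x (of_int n *\<^sub>R v)) = 0"
  unfolding gridN_eq_0_iff[OF lat]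
proof (intro allI impI)
  fix e :: real assume "e > 0"
  define U where "U = {u. gridN (grid_of x (of_int n *\<^sub>R u)) < e}"
  have "open U"
    using open_vimage[OF open_gridN_less[OF lat, of e], of "\<lambda>u. of_int n *\<^sub>R u"]
    unfolding U_def by (simp add: continuous_intros vimage_def)
  moreover have "u \<in> U" using zero \<open>e > 0\<close> unfolding U_def by simp
  ultimately obtain d where "d > 0" "ball u d \<subseteq> U" by (meson openE)
  then obtain a p where a: "a \<in> stab x" and p: "p \<in> (\<lambda>w. a *v w) ` grid_of x v" "p \<in> U"
    using approx by (metis dist_commute mem_ball subsetD)
  obtain l where "l \<in> x" "p = a *v (v + l)" using p(1) unfolding grid_of_def by auto
  have "of_int n *\<^sub>R (v + l) - of_int n *\<^sub>R v \<in> x"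
    using unimodular_lattice_scaleR_int[OF lat \<open>l \<in> x\<close>] by (simp add: algebra_simps)
  then have "gridN (grid_of x (of_int n *\<^sub>R v)) = gridN (grid_of x (of_int n *\<^sub>R (v + l)))"
    using grid_of_eq_iff[OF lat] by metis
  also have "\<dots> = gridN (grid_of x (a *v (of_int n *\<^sub>R (v + l))))"
    using gridN_stab[OF lat a] by simp
  also have "\<dots> = gridN (grid_of x (of_int n *\<^sub>R p))"
    using \<open>p = a *v (v + l)\<close> by (simp add: matrix_vector_mult_scaleR)
  also have "\<dots> < e" using p(2) unfolding U_def by simp
  finally show "gridN (grid_of x (of_int n *\<^sub>R v)) < e" .
qed

lemma FL_of_orbit_closure:
  assumes "unimodular_lattice x" "y \<in> fiber x" "z \<in> orbit_closure x y" "FL z"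
  shows "FL y"
proof -
  obtain v where y: "y = grid_of x v" using assms(2) unfolding fiber_def by auto
  obtain u where z: "z = grid_of x u"
    and approx: "\<forall>e>0. \<exists>a \<in> stab x. \<exists>p \<in> (\<lambda>w. a *v w) ` y. dist p u < e"
    using assms(3) unfolding orbit_closure_def by blast
  show ?thesis
    using assms(4) gridN_scaled_eq_0_of_approx[OF assms(1) approx[unfolded y]]
    unfolding y z FL_grid_of_iff[OF assms(1)] by blast
qed

lemma rational_grid_imp_FL: "rational_grid z \<Longrightarrow> FL z"
proof -
  assume "rational_grid z"
  then obtain x v and n :: nat where x: "unimodular_lattice x" "z = grid_of x v"
    and n: "n > 0" "of_nat n *\<^sub>R v \<in> x"
    unfolding rational_grid_def by blast
  have "grid_of x (of_int (int n) *\<^sub>R v) = grid_of x 0"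
    using grid_of_eq_iff[OF x(1)] n(2) by simp
  moreover have "gridN (grid_of x 0) = 0"
    unfolding gridN_eq_0_iff[OF x(1)] gridN_less_iff[OF x(1)]
    using unimodular_lattice_zero[OF x(1)] by (auto simp: normN_def zero_power intro!: bexI[of _ 0])
  moreover have "int n \<noteq> 0" using n(1) by simp
  ultimately show "FL z"
    unfolding x(2) FL_grid_of_iff[OF x(1)] by metis
qed

theorem lemma4p4:
  fixes x :: "(real^'n) set"
  assumes "CARD('n) \<ge> 2"
    and "unimodular_lattice x"
  shows "((\<forall>y \<in> fiber x. \<exists>z \<in> orbit_closure x y. FL z) \<longrightarrow> GFL x)
       \<and> ((\<forall>y \<in> fiber x. \<exists>z \<in> orbit_closure x y. rational_grid z) \<longrightarrow> GFL x)"
  using FL_of_orbit_closure[OF assms(2)] rational_grid_imp_FL unfolding GFL_def by blast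

end
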